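(* Let $\Gamma$ be a fixed graph on $K$ vertices and assume $K=o(\sqrt n)$, $\mathbb{E}_0(X_\Gamma)=\omega(1)$ and $\mathbb{E}_0(L^2)=1+o(1)$. Define \[ \mathcal I_\Gamma=\frac{1}{X_\Gamma^2}\sum_{\Gamma',\Gamma''}\mathbf 1_{\Gamma'\cap\Gamma''\neq\emptyset}, \] where $\Gamma'$ and $\Gamma''$ range over all copies of $\Gamma$ in $G$ and $\Gamma'\cap\Gamma''\ne\emptyset$ means their vertex sets intersect (with $\mathcal I_\Gamma:=0$ when $X_\Gamma=0$). Then $\mathbb{E}_0(\mathcal I_\Gamma)=o(1)$.
   Context: Model: $n$ nodes, $\lambda>0$. $\mathbb{P}_0$: $G\sim\mathcal G(n,\lambda/n)$. $\mathbb{P}_1$: $G=G_0\cup G'$ with $G_0\sim\mathcal G(n,\lambda/n)$ and $G'$ the image of $\Gamma$ under a uniformly random injection of its vertex set into $[n]$ independent of $G_0$. $X_\Gamma$ is the number of copies (subgraphs isomorphic to $\Gamma$) of $\Gamma$ in $G$; $L=\mathbb{P}_1(G)/\mathbb{P}_0(G)$; $\mathbb{E}_0$ is expectation under $\mathbb{P}_0$. Asymptotics as $n\to\infty$. *)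

theory Defs
  imports "HOL-Probability.Probability"
begin

text \<open>Graphs on vertex set [n] = {0..<n} are represented by their edge sets:
  sets of 2-element subsets of {..<n}.\<close>

definition all_edges :: "nat \<Rightarrow> nat set set" where
  "all_edges n = {e. e \<subseteq> {..<n} \<and> card e = 2}"

definition ER :: "nat \<Rightarrow> real \<Rightarrow> nat set set pmf" where
  "ER n p = map_pmf (\<lambda>f. {e \<in> all_edges n. f e})
              (Pi_pmf (all_edges n) False (\<lambda>_. bernoulli_pmf p))"

definition P0 :: "real \<Rightarrow> nat \<Rightarrow> nat set set pmf" where
  "P0 lam n = ER n (lam / real n)"

definition injections :: "nat \<Rightarrow> nat \<Rightarrow> (nat \<Rightarrow> nat) set" where
  "injections K n = {\<phi>. \<phi> \<in> {..<K} \<rightarrow>\<^sub>E {..<n} \<and> inj_on \<phi> {..<K}}"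

definition P1 :: "real \<Rightarrow> nat \<Rightarrow> nat \<Rightarrow> nat set set \<Rightarrow> nat set set pmf" where
  "P1 lam n K EG = bind_pmf (P0 lam n) (\<lambda>G0.
      map_pmf (\<lambda>\<phi>. G0 \<union> (\<lambda>e. \<phi> ` e) ` EG) (pmf_of_set (injections K n)))"

definition LR :: "real \<Rightarrow> nat \<Rightarrow> nat \<Rightarrow> nat set set \<Rightarrow> nat set set \<Rightarrow> real" where
  "LR lam n K EG G = pmf (P1 lam n K EG) G / pmf (P0 lam n) G"

definition copies :: "nat \<Rightarrow> nat \<Rightarrow> nat set set \<Rightarrow> nat set set \<Rightarrow> (nat set \<times> nat set set) set" where
  "copies n K EG G = {(V, F). V \<subseteq> {..<n} \<and> F \<subseteq> G \<and>
      (\<exists>\<phi>. bij_betw \<phi> {..<K} V \<and> F = (\<lambda>e. \<phi> ` e) ` EG)}"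

definition X_count :: "nat \<Rightarrow> nat \<Rightarrow> nat set set \<Rightarrow> nat set set \<Rightarrow> nat" where
  "X_count n K EG G = card (copies n K EG G)"

definition I_stat :: "nat \<Rightarrow> nat \<Rightarrow> nat set set \<Rightarrow> nat set set \<Rightarrow> real" where
  "I_stat n K EG G = (if X_count n K EG G = 0 then 0 else
     real (card {(c1, c2) \<in> copies n K EG G \<times> copies n K EG G. fst c1 \<inter> fst c2 \<noteq> {}})
       / (real (X_count n K EG G))^2)"

end

theory Submission
  imports Defs
begin

text \<open>
  Copies of \<open>\<Gamma>\<close> are counted through injections \<open>\<phi>\<close> of its vertex set into \<open>[n]\<close>.
  Every copy is hit by exactly \<open>a = |Aut \<Gamma>|\<close> injections, so the number \<open>X\<close> of injections whose
  image edges lie in \<open>G\<close> is \<open>a X\<^sub>\<Gamma>\<close>, the number \<open>Y\<close> of pairs of them with intersecting images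
  is \<open>a\<^sup>2\<close> times the numerator of \<open>\<I>\<^sub>\<Gamma>\<close>, and \<open>\<I>\<^sub>\<Gamma> = Y / X\<^sup>2\<close>. Moreover \<open>L = X / \<mu>\<close> with
  \<open>\<mu> = E\<^sub>0 X\<close>. Pointwise \<open>Y / X\<^sup>2 \<le> 4 Y / \<mu>\<^sup>2 + 4 (X - \<mu>)\<^sup>2 / \<mu>\<^sup>2\<close>: either \<open>X \<ge> \<mu> / 2\<close>, or the
  second term is at least \<open>1 \<ge> Y / X\<^sup>2\<close>. Pairs with disjoint images contribute
  \<open>\<mu>\<^sup>2 (1 - O(K\<^sup>2 / n))\<close> to \<open>E\<^sub>0 X\<^sup>2\<close>, hence \<open>E\<^sub>0 Y \<le> \<mu>\<^sup>2 (E\<^sub>0 L\<^sup>2 - 1 + 2 K\<^sup>2 / n)\<close> and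
  \<open>E\<^sub>0 \<I>\<^sub>\<Gamma> \<le> 8 (E\<^sub>0 L\<^sup>2 - 1) + 8 K\<^sup>2 / n \<longrightarrow> 0\<close>.
\<close>

lemma card_inj_extensional_funcset_lessThan:
  assumes "finite C"
  shows "card {f \<in> {..<k} \<rightarrow>\<^sub>E C. inj_on f {..<k}} = (\<Prod>i<k. card C - i)"
  using card_inj_on_subset_funcset[OF finite_lessThan assms subset_refl, of k]
  by (simp add: atLeast0LessThan)

lemma card_eq_mult_card_image:
  assumes "finite A" and "\<And>x. x \<in> A \<Longrightarrow> card {y \<in> A. f y = f x} = k"
  shows "card A = k * card (f ` A)"
proof -
  have "card A = (\<Sum>c\<in>f ` A. card {y \<in> A. f y = c})"
    using sum.group[OF assms(1) finite_imageI[OF assms(1)] subset_refl, where g = f and h = "\<lambda>_. 1::nat"]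
    by simp
  also have "\<dots> = (\<Sum>c\<in>f ` A. k)" using assms(2) by (intro sum.cong refl) auto
  finally show ?thesis by simp
qed

lemma prod_lessThan_shift_ge:
  fixes n k :: nat
  assumes "2 * k \<le> n"
  shows "(1 - 2 * real k ^ 2 / real n) * (\<Prod>i<k. real (n - i)) \<le> (\<Prod>i<k. real (n - k - i))"
proof (cases "k = 0")
  case False
  hence n_pos: "n > 0" using assms by simp
  define c where "c = 1 - 2 * real k / real n"
  have c_nonneg: "c \<ge> 0" using assms n_pos by (simp add: c_def field_simps)
  have "1 - 2 * real k ^ 2 / real n \<le> c ^ k"
    using Bernoulli_inequality[of "- 2 * real k / real n" k] c_nonneg
    by (simp add: c_def power2_eq_square mult.assoc mult.left_commute)
  hence "(1 - 2 * real k ^ 2 / real n) * (\<Prod>i<k. real (n - i)) \<le> (\<Prod>i<k. c * real (n - i))"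
    by (simp add: prod.distrib mult_right_mono prod_nonneg)
  also have "\<dots> \<le> (\<Prod>i<k. real (n - k - i))"
  proof (rule prod_mono)
    fix i assume i: "i \<in> {..<k}"
    have "2 * real k * i \<le> real n * k"
      using i assms by (intro order.trans[OF mult_left_mono mult_right_mono[of "2 * real k"]]) auto
    hence "(real n - 2 * k) * (real n - i) \<le> real n * (real n - k - i)"
      by (simp add: algebra_simps)
    moreover have "real (n - i) = real n - i" "real (n - k - i) = real n - k - i"
      using i assms by auto
    ultimately have "c * real (n - i) \<le> real (n - k - i)"
      using n_pos by (simp add: c_def field_simps)
    thus "0 \<le> c * real (n - i) \<and> c * real (n - i) \<le> real (n - k - i)"
      using c_nonneg by simp
  qed
  finally show ?thesis .
qed simp

lemma ratio_le_deviation_bound: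
  fixes x y \<mu> :: real
  assumes "0 \<le> y" "y \<le> x\<^sup>2" "0 < \<mu>"
  shows "(if x = 0 then 0 else y / x\<^sup>2) \<le> 4 * y / \<mu>\<^sup>2 + 4 * (x - \<mu>)\<^sup>2 / \<mu>\<^sup>2"
proof (cases "2 * x \<ge> \<mu>")
  case True
  hence "y / x\<^sup>2 \<le> y / (\<mu> / 2)\<^sup>2"
    using assms by (intro divide_left_mono power_mono) auto
  also have "\<dots> = 4 * y / \<mu>\<^sup>2" by (simp add: power_divide)
  finally have "(if x = 0 then 0 else y / x\<^sup>2) \<le> 4 * y / \<mu>\<^sup>2"
    using assms by simp
  moreover have "0 \<le> 4 * (x - \<mu>)\<^sup>2 / \<mu>\<^sup>2" by simp
  ultimately show ?thesis by linarith
next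
  case False
  hence "(\<mu> / 2)\<^sup>2 \<le> (x - \<mu>)\<^sup>2"
    using assms by (intro abs_le_square_iff[THEN iffD1]) auto
  hence "1 \<le> 4 * (x - \<mu>)\<^sup>2 / \<mu>\<^sup>2"
    using assms by (simp add: field_simps power2_eq_square)
  moreover have "(if x = 0 then 0 else y / x\<^sup>2) \<le> 1"
    using assms by (simp add: divide_le_eq_1)
  moreover have "0 \<le> 4 * y / \<mu>\<^sup>2" using assms by simp
  ultimately show ?thesis by linarith
qed

lemma expectation_of_bool:
  "measure_pmf.expectation M (\<lambda>x. of_bool (P x) :: real) = measure_pmf.prob M {x. P x}"
proof -
  have "(\<lambda>x. of_bool (P x) :: real) = indicator {x. P x}" by (auto simp: indicator_def)
  thus ?thesis by simp
qed

section \<open>Erdos-Renyi graphs\<close>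

lemma finite_all_edges: "finite (all_edges n)"
  by (rule finite_subset[of _ "Pow {..<n}"]) (auto simp: all_edges_def)

lemma set_pmf_ER: "set_pmf (ER n p) \<subseteq> Pow (all_edges n)"
  by (auto simp: ER_def)

lemma integrable_ER [simp]: "integrable (measure_pmf (ER n p)) (f :: nat set set \<Rightarrow> real)"
  using set_pmf_ER finite_all_edges
  by (intro integrable_measure_pmf_finite) (meson finite_Pow_iff finite_subset)

lemma measure_ER_eq_prod:
  assumes "\<And>f. {e \<in> all_edges n. f e} \<in> U \<longleftrightarrow> (\<forall>e\<in>all_edges n. f e \<in> B e)"
  shows "measure_pmf.prob (ER n p) U = (\<Prod>e\<in>all_edges n. measure_pmf.prob (bernoulli_pmf p) (B e))"
proof -
  have "(\<lambda>f. {e \<in> all_edges n. f e}) -` U = Pi (all_edges n) B"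
    using assms by (auto simp: Pi_def)
  thus ?thesis
    unfolding ER_def measure_map_pmf by (simp add: measure_Pi_pmf_Pi finite_all_edges)
qed

lemma measure_bernoulli_pmf:
  assumes "0 \<le> p" "p \<le> 1"
  shows "measure_pmf.prob (bernoulli_pmf p) {True} = p"
    and "measure_pmf.prob (bernoulli_pmf p) {False} = 1 - p"
  using assms by (auto simp: measure_pmf_single)

lemma prob_ER_supset:
  assumes "0 \<le> p" "p \<le> 1" "S \<subseteq> all_edges n"
  shows "measure_pmf.prob (ER n p) {G. S \<subseteq> G} = p ^ card S"
proof -
  have "measure_pmf.prob (ER n p) {G. S \<subseteq> G} =
      (\<Prod>e\<in>all_edges n. measure_pmf.prob (bernoulli_pmf p) (if e \<in> S then {True} else UNIV))"
    by (rule measure_ER_eq_prod) (use assms in auto)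
  also have "\<dots> = (\<Prod>e\<in>all_edges n. if e \<in> S then p else 1)"
    by (rule prod.cong) (auto simp: measure_bernoulli_pmf assms)
  also have "\<dots> = p ^ card S"
    using assms finite_all_edges by (simp add: prod.If_cases Int_absorb1)
  finally show ?thesis .
qed

lemma pmf_ER:
  assumes "0 \<le> p" "p \<le> 1" "G \<subseteq> all_edges n"
  shows "pmf (ER n p) G = (\<Prod>e\<in>all_edges n. if e \<in> G then p else 1 - p)"
proof -
  have "pmf (ER n p) G = measure_pmf.prob (ER n p) {G}"
    by (simp add: measure_pmf_single)
  also have "\<dots> = (\<Prod>e\<in>all_edges n. measure_pmf.prob (bernoulli_pmf p) {e \<in> G})"
    by (rule measure_ER_eq_prod) (use assms in auto)
  also have "\<dots> = (\<Prod>e\<in>all_edges n. if e \<in> G then p else 1 - p)"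
    by (rule prod.cong) (auto simp: measure_bernoulli_pmf assms)
  finally show ?thesis .
qed

lemma pmf_ER_pos:
  assumes "0 < p" "p < 1" "G \<subseteq> all_edges n"
  shows "pmf (ER n p) G > 0"
  using assms by (simp add: pmf_ER prod_pos)

lemma prob_ER_Un_eq:
  assumes "0 < p" "p < 1" "A \<subseteq> G" "G \<subseteq> all_edges n"
  shows "measure_pmf.prob (ER n p) {G0. G0 \<union> A = G} = pmf (ER n p) G / p ^ card A"
proof -
  have "measure_pmf.prob (ER n p) {G0. G0 \<union> A = G} =
      (\<Prod>e\<in>all_edges n. measure_pmf.prob (bernoulli_pmf p) (if e \<in> A then UNIV else {e \<in> G}))"
    by (rule measure_ER_eq_prod) (use assms in auto)
  also have "\<dots> = (\<Prod>e\<in>all_edges n. if e \<in> A then 1 else if e \<in> G then p else 1 - p)"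
    by (rule prod.cong) (use assms in \<open>auto simp: measure_bernoulli_pmf\<close>)
  finally have prob_eq: "measure_pmf.prob (ER n p) {G0. G0 \<union> A = G} = \<dots>" .
  have "p ^ card A = (\<Prod>e\<in>all_edges n. if e \<in> A then p else 1)"
    using assms finite_all_edges by (simp add: prod.If_cases Int_absorb1)
  hence "p ^ card A * measure_pmf.prob (ER n p) {G0. G0 \<union> A = G} =
      (\<Prod>e\<in>all_edges n. (if e \<in> A then p else 1) * (if e \<in> A then 1 else if e \<in> G then p else 1 - p))"
    unfolding prob_eq by (simp add: prod.distrib)
  also have "\<dots> = pmf (ER n p) G"
    using assms by (simp add: pmf_ER) (intro prod.cong; auto)
  finally show ?thesis using assms by (simp add: field_simps)
qed

lemma expectation_ER_card_supsets:
  assumes "0 \<le> p" "p \<le> 1" "finite A"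
    and "\<And>x. x \<in> A \<Longrightarrow> S x \<subseteq> all_edges n \<and> card (S x) = k"
  shows "measure_pmf.expectation (ER n p) (\<lambda>G. real (card {x \<in> A. S x \<subseteq> G})) = real (card A) * p ^ k"
proof -
  have "measure_pmf.expectation (ER n p) (\<lambda>G. real (card {x \<in> A. S x \<subseteq> G})) =
      measure_pmf.expectation (ER n p) (\<lambda>G. \<Sum>x\<in>A. of_bool (S x \<subseteq> G))"
    using assms(3) by (simp add: sum_of_bool_eq Collect_conj_eq Int_commute)
  also have "\<dots> = (\<Sum>x\<in>A. measure_pmf.prob (ER n p) {G. S x \<subseteq> G})"
    by (simp add: expectation_of_bool)
  also have "\<dots> = (\<Sum>x\<in>A. p ^ k)"
    using assms by (intro sum.cong refl) (simp add: prob_ER_supset)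
  finally show ?thesis by simp
qed

section \<open>Labelled copies\<close>

lemma mem_injections: "\<phi> \<in> injections K n \<longleftrightarrow> \<phi> \<in> {..<K} \<rightarrow>\<^sub>E {..<n} \<and> inj_on \<phi> {..<K}"
  by (simp add: injections_def)

lemma finite_injections: "finite (injections K n)"
  by (rule finite_subset[of _ "{..<K} \<rightarrow>\<^sub>E {..<n}"]) (auto simp: mem_injections finite_PiE)

lemma card_injections: "card (injections K n) = (\<Prod>i<K. n - i)"
  using card_inj_extensional_funcset_lessThan[of "{..<n}" K] by (simp add: injections_def)

locale pattern =
  fixes n K :: nat and EG :: "nat set set"
  assumes EG_graph: "EG \<subseteq> all_edges K"
begin

abbreviation Inj :: "(nat \<Rightarrow> nat) set" where "Inj \<equiv> injections K n"

definition copy_vertices :: "(nat \<Rightarrow> nat) \<Rightarrow> nat set" where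
  "copy_vertices \<phi> = \<phi> ` {..<K}"

definition copy_edges :: "(nat \<Rightarrow> nat) \<Rightarrow> nat set set" where
  "copy_edges \<phi> = (\<lambda>e. \<phi> ` e) ` EG"

definition copy_of :: "(nat \<Rightarrow> nat) \<Rightarrow> nat set \<times> nat set set" where
  "copy_of \<phi> = (copy_vertices \<phi>, copy_edges \<phi>)"

definition labelled :: "nat set set \<Rightarrow> (nat \<Rightarrow> nat) set" where
  "labelled G = {\<phi> \<in> Inj. copy_edges \<phi> \<subseteq> G}"

definition overlapping :: "nat set set \<Rightarrow> ((nat \<Rightarrow> nat) \<times> (nat \<Rightarrow> nat)) set" where
  "overlapping G =
    {(\<phi>, \<psi>) \<in> labelled G \<times> labelled G. copy_vertices \<phi> \<inter> copy_vertices \<psi> \<noteq> {}}"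

definition disjoint_pairs :: "((nat \<Rightarrow> nat) \<times> (nat \<Rightarrow> nat)) set" where
  "disjoint_pairs = {(\<phi>, \<psi>) \<in> Inj \<times> Inj. copy_vertices \<phi> \<inter> copy_vertices \<psi> = {}}"

definition automorphisms :: "(nat \<Rightarrow> nat) set" where
  "automorphisms = {\<sigma> \<in> injections K K. copy_edges \<sigma> = EG}"

lemma edge_in_EG: "e \<in> EG \<Longrightarrow> e \<subseteq> {..<K} \<and> card e = 2"
  using EG_graph by (auto simp: all_edges_def)

lemma finite_EG: "finite EG"
  by (rule finite_subset[of _ "Pow {..<K}"]) (auto dest: edge_in_EG)

lemma finite_copy_edges: "finite (copy_edges \<phi>)"
  by (simp add: copy_edges_def finite_EG)

lemma copy_edges_restrict: "copy_edges (restrict f {..<K}) = copy_edges f"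
  unfolding copy_edges_def
  by (intro image_cong refl) (use edge_in_EG in \<open>auto simp: restrict_def\<close>)

lemma copy_edges_comp: "copy_edges (f \<circ> g) = (\<lambda>e. f ` e) ` copy_edges g"
  by (simp add: copy_edges_def image_image image_comp)

lemma copy_edges_subset:
  assumes "\<phi> \<in> Inj"
  shows "copy_edges \<phi> \<subseteq> all_edges n"
proof
  fix x assume "x \<in> copy_edges \<phi>"
  then obtain e where e: "e \<in> EG" "x = \<phi> ` e" by (auto simp: copy_edges_def)
  moreover have "inj_on \<phi> e" using assms edge_in_EG[OF e(1)] by (auto simp: mem_injections inj_on_subset)
  ultimately show "x \<in> all_edges n"
    using assms edge_in_EG[OF e(1)] by (auto simp: all_edges_def mem_injections card_image)
qed

lemma card_copy_edges:
  assumes "\<phi> \<in> Inj"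
  shows "card (copy_edges \<phi>) = card EG"
proof -
  have "inj_on (\<lambda>e. \<phi> ` e) EG"
    using assms edge_in_EG by (intro inj_onI) (metis mem_injections inj_on_image_eq_iff)
  thus ?thesis by (simp add: copy_edges_def card_image)
qed

lemma copy_edges_disjoint:
  assumes "copy_vertices \<phi> \<inter> copy_vertices \<psi> = {}"
  shows "copy_edges \<phi> \<inter> copy_edges \<psi> = {}"
proof (rule ccontr)
  assume "copy_edges \<phi> \<inter> copy_edges \<psi> \<noteq> {}"
  then obtain e e' where e: "e \<in> EG" "e' \<in> EG" "\<phi> ` e = \<psi> ` e'" by (auto simp: copy_edges_def)
  obtain x where "x \<in> e" using edge_in_EG[OF e(1)] by fastforce
  hence "\<phi> x \<in> \<psi> ` e'" using e(3) by blast
  thus False using assms \<open>x \<in> e\<close> edge_in_EG[OF e(1)] edge_in_EG[OF e(2)]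
    by (auto simp: copy_vertices_def)
qed

lemma copies_eq_image_labelled: "copies n K EG G = copy_of ` labelled G"
proof (intro equalityI subsetI)
  fix c assume "c \<in> copies n K EG G"
  then obtain V F \<phi> where c: "c = (V, F)" "V \<subseteq> {..<n}" "F \<subseteq> G" "bij_betw \<phi> {..<K} V"
    "F = copy_edges \<phi>"
    by (auto simp: copies_def copy_edges_def)
  have "restrict \<phi> {..<K} \<in> Inj" using c(2,4) by (auto simp: mem_injections bij_betw_def inj_on_def)
  moreover have "copy_of (restrict \<phi> {..<K}) = c"
    using c(1,4,5) by (auto simp: copy_of_def copy_vertices_def copy_edges_restrict bij_betw_def)
  ultimately show "c \<in> copy_of ` labelled G"
    using c(3,5) copy_edges_restrict[of \<phi>] by (auto simp: labelled_def intro!: image_eqI)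
next
  fix c assume "c \<in> copy_of ` labelled G"
  then obtain \<phi> where \<phi>: "\<phi> \<in> Inj" "copy_edges \<phi> \<subseteq> G" "c = copy_of \<phi>" by (auto simp: labelled_def)
  have "bij_betw \<phi> {..<K} (copy_vertices \<phi>)" "copy_vertices \<phi> \<subseteq> {..<n}"
    using \<phi>(1) by (auto simp: mem_injections copy_vertices_def intro: inj_on_imp_bij_betw)
  thus "c \<in> copies n K EG G" using \<phi> unfolding copies_def copy_of_def copy_edges_def by auto
qed

lemma comp_automorphism_same_copy:
  assumes \<phi>0: "\<phi>0 \<in> Inj" and \<sigma>: "\<sigma> \<in> automorphisms"
  shows "restrict (\<phi>0 \<circ> \<sigma>) {..<K} \<in> Inj" and "copy_of (restrict (\<phi>0 \<circ> \<sigma>) {..<K}) = copy_of \<phi>0"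
proof -
  have \<sigma>_K: "\<sigma> ` {..<K} \<subseteq> {..<K}" "inj_on \<sigma> {..<K}" "copy_edges \<sigma> = EG"
    using \<sigma> by (auto simp: automorphisms_def mem_injections)
  have "inj_on (\<phi>0 \<circ> \<sigma>) {..<K}"
    using \<sigma>_K \<phi>0 by (intro comp_inj_on) (auto simp: mem_injections elim: inj_on_subset)
  thus "restrict (\<phi>0 \<circ> \<sigma>) {..<K} \<in> Inj"
    using \<sigma>_K \<phi>0 by (auto simp: mem_injections PiE_iff image_subset_iff)
  have "\<sigma> ` {..<K} = {..<K}" using \<sigma>_K by (simp add: endo_inj_surj)
  hence "copy_vertices (restrict (\<phi>0 \<circ> \<sigma>) {..<K}) = copy_vertices \<phi>0"
    unfolding copy_vertices_def image_restrict_eq image_comp[symmetric] by simp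
  moreover have "copy_edges (restrict (\<phi>0 \<circ> \<sigma>) {..<K}) = copy_edges \<phi>0"
    unfolding copy_edges_restrict copy_edges_comp \<sigma>_K(3) by (simp only: copy_edges_def)
  ultimately show "copy_of (restrict (\<phi>0 \<circ> \<sigma>) {..<K}) = copy_of \<phi>0"
    by (simp add: copy_of_def)
qed

lemma inv_comp_automorphism:
  assumes \<phi>0: "\<phi>0 \<in> Inj" and \<phi>: "\<phi> \<in> Inj" "copy_of \<phi> = copy_of \<phi>0"
  shows "restrict (inv_into {..<K} \<phi>0 \<circ> \<phi>) {..<K} \<in> automorphisms"
proof -
  define \<iota> where "\<iota> = inv_into {..<K} \<phi>0"
  have same: "\<phi> ` {..<K} = \<phi>0 ` {..<K}" "copy_edges \<phi> = copy_edges \<phi>0"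
    using \<phi>(2) by (auto simp: copy_of_def copy_vertices_def)
  have inj0: "inj_on \<phi>0 {..<K}" using \<phi>0 by (simp add: mem_injections)
  have "\<iota> (\<phi> x) \<in> {..<K}" if "x < K" for x
    using that same(1) unfolding \<iota>_def by (metis image_eqI inv_into_into lessThan_iff)
  moreover have "inj_on (\<iota> \<circ> \<phi>) {..<K}"
    by (rule comp_inj_on) (use \<phi>(1) same(1) in \<open>simp_all add: mem_injections \<iota>_def inj_on_inv_into\<close>)
  moreover have "copy_edges (\<iota> \<circ> \<phi>) = EG"
  proof -
    have "copy_edges (\<iota> \<circ> \<phi>) = (\<lambda>e. \<iota> ` \<phi>0 ` e) ` EG"
      unfolding copy_edges_comp same(2) by (simp add: copy_edges_def image_image)
    also have "\<dots> = EG"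
      using edge_in_EG inj0 by (simp add: \<iota>_def inv_into_image_cancel cong: image_cong)
    finally show ?thesis .
  qed
  ultimately show ?thesis
    by (auto simp: automorphisms_def mem_injections \<iota>_def[symmetric] copy_edges_restrict inj_on_def)
qed

lemma card_copy_of_fibre:
  assumes \<phi>0: "\<phi>0 \<in> Inj"
  shows "card {\<phi> \<in> Inj. copy_of \<phi> = copy_of \<phi>0} = card automorphisms"
proof -
  define \<iota> where "\<iota> = inv_into {..<K} \<phi>0"
  have inj0: "inj_on \<phi>0 {..<K}" using \<phi>0 by (simp add: mem_injections)
  have "bij_betw (\<lambda>\<sigma>. restrict (\<phi>0 \<circ> \<sigma>) {..<K}) automorphisms {\<phi> \<in> Inj. copy_of \<phi> = copy_of \<phi>0}"
  proof (rule bij_betw_byWitness[where f' = "\<lambda>\<phi>. restrict (\<iota> \<circ> \<phi>) {..<K}"])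
    show "\<forall>\<sigma>\<in>automorphisms. restrict (\<iota> \<circ> restrict (\<phi>0 \<circ> \<sigma>) {..<K}) {..<K} = \<sigma>"
    proof (intro ballI ext)
      fix \<sigma> x assume "\<sigma> \<in> automorphisms"
      hence \<sigma>: "\<sigma> \<in> {..<K} \<rightarrow>\<^sub>E {..<K}" by (simp add: automorphisms_def mem_injections)
      show "restrict (\<iota> \<circ> restrict (\<phi>0 \<circ> \<sigma>) {..<K}) {..<K} x = \<sigma> x"
      proof (cases "x < K")
        case True
        hence "\<sigma> x \<in> {..<K}" using \<sigma> by auto
        thus ?thesis using True inj0 by (simp add: \<iota>_def)
      next
        case False
        thus ?thesis using PiE_arb[OF \<sigma>, of x] by simp
      qed
    qed
    show "\<forall>\<phi>\<in>{\<phi> \<in> Inj. copy_of \<phi> = copy_of \<phi>0}. restrict (\<phi>0 \<circ> restrict (\<iota> \<circ> \<phi>) {..<K}) {..<K} = \<phi>"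
    proof (intro ballI ext)
      fix \<phi> x assume "\<phi> \<in> {\<phi> \<in> Inj. copy_of \<phi> = copy_of \<phi>0}"
      hence \<phi>: "\<phi> \<in> {..<K} \<rightarrow>\<^sub>E {..<n}" "\<phi> ` {..<K} = \<phi>0 ` {..<K}"
        by (simp_all add: mem_injections copy_of_def copy_vertices_def)
      show "restrict (\<phi>0 \<circ> restrict (\<iota> \<circ> \<phi>) {..<K}) {..<K} x = \<phi> x"
      proof (cases "x < K")
        case True
        hence "\<phi> x \<in> \<phi>0 ` {..<K}" using \<phi>(2) by blast
        thus ?thesis using True by (simp add: \<iota>_def f_inv_into_f)
      next
        case False
        thus ?thesis using PiE_arb[OF \<phi>(1), of x] by simp
      qed
    qed
    show "(\<lambda>\<sigma>. restrict (\<phi>0 \<circ> \<sigma>) {..<K}) ` automorphisms \<subseteq> {\<phi> \<in> Inj. copy_of \<phi> = copy_of \<phi>0}"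
      using comp_automorphism_same_copy[OF \<phi>0] by blast
    show "(\<lambda>\<phi>. restrict (\<iota> \<circ> \<phi>) {..<K}) ` {\<phi> \<in> Inj. copy_of \<phi> = copy_of \<phi>0} \<subseteq> automorphisms"
      using inv_comp_automorphism[OF \<phi>0] unfolding \<iota>_def by blast
  qed
  from bij_betw_same_card[OF this] show ?thesis by simp
qed

lemma finite_labelled: "finite (labelled G)"
  using finite_injections by (simp add: labelled_def)

lemma card_automorphisms_pos: "card automorphisms > 0"
proof -
  have "copy_edges (restrict id {..<K}) = EG"
    unfolding copy_edges_restrict by (simp add: copy_edges_def)
  hence "restrict id {..<K} \<in> automorphisms"
    by (simp add: automorphisms_def mem_injections)
  moreover have "finite automorphisms"
    using finite_injections by (simp add: automorphisms_def)
  ultimately show ?thesis by (auto simp: card_gt_0_iff)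
qed

lemma card_labelled: "card (labelled G) = card automorphisms * X_count n K EG G"
proof -
  have "card (labelled G) = card automorphisms * card (copy_of ` labelled G)"
  proof (rule card_eq_mult_card_image[OF finite_labelled])
    fix \<phi> assume "\<phi> \<in> labelled G"
    hence "{\<psi> \<in> labelled G. copy_of \<psi> = copy_of \<phi>} = {\<psi> \<in> Inj. copy_of \<psi> = copy_of \<phi>}"
      "\<phi> \<in> Inj"
      by (auto simp: labelled_def copy_of_def)
    thus "card {\<psi> \<in> labelled G. copy_of \<psi> = copy_of \<phi>} = card automorphisms"
      by (simp add: card_copy_of_fibre)
  qed
  thus ?thesis by (simp add: X_count_def copies_eq_image_labelled)
qed

lemma card_overlapping:
  "card (overlapping G) = card automorphisms ^ 2 *
     card {(c1, c2) \<in> copies n K EG G \<times> copies n K EG G. fst c1 \<inter> fst c2 \<noteq> {}}"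
proof -
  define copy_pair where "copy_pair = map_prod copy_of copy_of"
  have "card (overlapping G) = card automorphisms ^ 2 * card (copy_pair ` overlapping G)"
  proof (rule card_eq_mult_card_image)
    show "finite (overlapping G)"
      by (rule finite_subset[of _ "labelled G \<times> labelled G"]) (auto simp: overlapping_def finite_labelled)
    fix x assume x: "x \<in> overlapping G"
    hence "{y \<in> overlapping G. copy_pair y = copy_pair x} =
        {\<phi> \<in> Inj. copy_of \<phi> = copy_of (fst x)} \<times> {\<psi> \<in> Inj. copy_of \<psi> = copy_of (snd x)}"
      "fst x \<in> Inj" "snd x \<in> Inj"
      by (auto simp: overlapping_def labelled_def copy_of_def copy_pair_def)
    thus "card {y \<in> overlapping G. copy_pair y = copy_pair x} = card automorphisms ^ 2"
      by (simp add: card_cartesian_product card_copy_of_fibre power2_eq_square)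
  qed
  moreover have "copy_pair ` overlapping G =
      {(c1, c2) \<in> copies n K EG G \<times> copies n K EG G. fst c1 \<inter> fst c2 \<noteq> {}}"
    unfolding copies_eq_image_labelled
    by (auto simp: copy_pair_def overlapping_def copy_of_def image_iff) blast
  ultimately show ?thesis by simp
qed

lemma card_overlapping_le: "card (overlapping G) \<le> card (labelled G) ^ 2"
proof -
  have "card (overlapping G) \<le> card (labelled G \<times> labelled G)"
    by (rule card_mono) (auto simp: overlapping_def finite_labelled)
  thus ?thesis by (simp add: card_cartesian_product power2_eq_square)
qed

lemma I_stat_eq:
  "I_stat n K EG G =
    (if card (labelled G) = 0 then 0 else real (card (overlapping G)) / real (card (labelled G)) ^ 2)"
proof (cases "X_count n K EG G = 0")
  case True
  thus ?thesis by (simp add: I_stat_def card_labelled)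
next
  case False
  thus ?thesis using card_automorphisms_pos
    by (simp add: I_stat_def card_labelled card_overlapping power_mult_distrib)
qed

lemma card_labelled_sq:
  "card (labelled G) ^ 2 = card (overlapping G) +
     card {x \<in> disjoint_pairs. copy_edges (fst x) \<union> copy_edges (snd x) \<subseteq> G}"
  (is "_ = card ?O + card ?D")
proof -
  have split: "labelled G \<times> labelled G = ?O \<union> ?D"
    by (auto simp: labelled_def overlapping_def disjoint_pairs_def)
  hence "finite ?O" "finite ?D"
    using finite_cartesian_product[OF finite_labelled finite_labelled, of G G] by simp_all
  moreover have "?O \<inter> ?D = {}"
    by (auto simp: overlapping_def disjoint_pairs_def)
  moreover have "card (labelled G) ^ 2 = card (?O \<union> ?D)"
    unfolding split[symmetric] by (simp add: card_cartesian_product power2_eq_square)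
  ultimately show ?thesis by (simp add: card_Un_disjoint)
qed

lemma card_disjoint_pairs: "card disjoint_pairs = card Inj * (\<Prod>i<K. n - K - i)"
proof -
  have "card {\<psi> \<in> Inj. copy_vertices \<phi> \<inter> copy_vertices \<psi> = {}} = (\<Prod>i<K. n - K - i)"
    if "\<phi> \<in> Inj" for \<phi>
  proof -
    have "card (copy_vertices \<phi>) = K" "copy_vertices \<phi> \<subseteq> {..<n}"
      using that by (auto simp: mem_injections copy_vertices_def card_image)
    hence "card ({..<n} - copy_vertices \<phi>) = n - K"
      by (simp add: card_Diff_subset finite_subset)
    moreover have "{\<psi> \<in> Inj. copy_vertices \<phi> \<inter> copy_vertices \<psi> = {}} =
        {\<psi> \<in> {..<K} \<rightarrow>\<^sub>E {..<n} - copy_vertices \<phi>. inj_on \<psi> {..<K}}"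
      by (auto simp: mem_injections copy_vertices_def PiE_iff) (metis image_eqI lessThan_iff)
    ultimately show ?thesis by (simp add: card_inj_extensional_funcset_lessThan)
  qed
  moreover have "disjoint_pairs = Sigma Inj (\<lambda>\<phi>. {\<psi> \<in> Inj. copy_vertices \<phi> \<inter> copy_vertices \<psi> = {}})"
    by (auto simp: disjoint_pairs_def)
  ultimately show ?thesis
    by (simp add: card_SigmaI finite_injections)
qed

end

section \<open>Moments under the null model\<close>

locale planted = pattern +
  fixes lam :: real
  assumes lam_pos: "0 < lam" and lam_less_n: "lam < real n" and K_le_n: "K \<le> n"
begin

definition p :: real where "p = lam / real n"
definition \<mu> :: real where "\<mu> = real (card Inj) * p ^ card EG"

lemma p_pos: "0 < p" and p_less_1: "p < 1"
  using lam_pos lam_less_n by (auto simp: p_def field_simps)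

lemma P0_eq_ER: "P0 lam n = ER n p"
  by (simp add: P0_def p_def)

lemma card_injections_pos: "card Inj > 0"
  using K_le_n by (auto simp: card_injections prod_pos)

lemma \<mu>_pos: "\<mu> > 0"
  using card_injections_pos p_pos by (simp add: \<mu>_def)

lemma pmf_P1:
  "pmf (P1 lam n K EG) G =
     (\<Sum>\<phi>\<in>Inj. measure_pmf.prob (P0 lam n) {G0. G0 \<union> copy_edges \<phi> = G}) / real (card Inj)"
proof -
  have "pmf (P1 lam n K EG) G = measure_pmf.expectation (P0 lam n)
      (\<lambda>G0. (\<Sum>\<phi>\<in>Inj. of_bool (G0 \<union> copy_edges \<phi> = G)) / real (card Inj))"
    unfolding P1_def pmf_bind pmf_map
    using finite_injections card_injections_pos
    by (intro Bochner_Integration.integral_cong refl)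
       (simp add: measure_pmf_of_set card_gt_0_iff sum_of_bool_eq copy_edges_def vimage_def
         Collect_conj_eq Int_commute)
  thus ?thesis by (simp add: P0_eq_ER expectation_of_bool)
qed

lemma LR_eq:
  assumes G: "G \<subseteq> all_edges n"
  shows "LR lam n K EG G = real (card (labelled G)) / \<mu>"
proof -
  have "measure_pmf.prob (P0 lam n) {G0. G0 \<union> copy_edges \<phi> = G} =
      of_bool (copy_edges \<phi> \<subseteq> G) * (pmf (P0 lam n) G / p ^ card EG)" if "\<phi> \<in> Inj" for \<phi>
  proof (cases "copy_edges \<phi> \<subseteq> G")
    case True
    thus ?thesis
      using that p_pos p_less_1 G by (simp add: P0_eq_ER prob_ER_Un_eq card_copy_edges)
  next
    case False
    hence "{G0. G0 \<union> copy_edges \<phi> = G} = {}" by auto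
    thus ?thesis using False by simp
  qed
  hence "(\<Sum>\<phi>\<in>Inj. measure_pmf.prob (P0 lam n) {G0. G0 \<union> copy_edges \<phi> = G}) =
      (\<Sum>\<phi>\<in>Inj. of_bool (copy_edges \<phi> \<subseteq> G)) * (pmf (P0 lam n) G / p ^ card EG)"
    unfolding sum_distrib_right by (intro sum.cong) auto
  also have "(\<Sum>\<phi>\<in>Inj. of_bool (copy_edges \<phi> \<subseteq> G)) = real (card (labelled G))"
    using finite_injections by (simp add: labelled_def sum_of_bool_eq Collect_conj_eq Int_commute)
  finally have "pmf (P1 lam n K EG) G =
      real (card (labelled G)) * pmf (P0 lam n) G / (real (card Inj) * p ^ card EG)"
    unfolding pmf_P1 by simp
  moreover have "pmf (P0 lam n) G > 0"
    using p_pos p_less_1 G by (simp add: P0_eq_ER pmf_ER_pos)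
  ultimately show ?thesis by (simp add: LR_def \<mu>_def)
qed

lemma expectation_LR_sq:
  "measure_pmf.expectation (P0 lam n) (\<lambda>G. (LR lam n K EG G)\<^sup>2) =
     measure_pmf.expectation (P0 lam n) (\<lambda>G. real (card (labelled G)) ^ 2) / \<mu>\<^sup>2"
proof -
  have "measure_pmf.expectation (P0 lam n) (\<lambda>G. (LR lam n K EG G)\<^sup>2) =
      measure_pmf.expectation (P0 lam n) (\<lambda>G. real (card (labelled G)) ^ 2 / \<mu>\<^sup>2)"
    using set_pmf_ER[of n p]
    by (intro integral_cong_AE) (auto simp: AE_measure_pmf_iff P0_eq_ER LR_eq power_divide)
  thus ?thesis by simp
qed

lemma expectation_card_labelled:
  "measure_pmf.expectation (P0 lam n) (\<lambda>G. real (card (labelled G))) = \<mu>"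
  unfolding labelled_def P0_eq_ER \<mu>_def
  using p_pos p_less_1
  by (intro expectation_ER_card_supsets) (auto simp: finite_injections copy_edges_subset card_copy_edges)

lemma expectation_card_labelled_sq:
  "measure_pmf.expectation (P0 lam n) (\<lambda>G. real (card (labelled G)) ^ 2) =
     measure_pmf.expectation (P0 lam n) (\<lambda>G. real (card (overlapping G))) +
     real (card disjoint_pairs) * p ^ (2 * card EG)"
proof -
  have "measure_pmf.expectation (ER n p)
      (\<lambda>G. real (card {x \<in> disjoint_pairs. copy_edges (fst x) \<union> copy_edges (snd x) \<subseteq> G})) =
      real (card disjoint_pairs) * p ^ (2 * card EG)"
  proof (rule expectation_ER_card_supsets)
    show "finite disjoint_pairs"
      by (rule finite_subset[of _ "Inj \<times> Inj"]) (auto simp: disjoint_pairs_def finite_injections)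
    fix x assume "x \<in> disjoint_pairs"
    then obtain \<phi> \<psi> where x: "x = (\<phi>, \<psi>)" "\<phi> \<in> Inj" "\<psi> \<in> Inj"
        "copy_vertices \<phi> \<inter> copy_vertices \<psi> = {}"
      by (auto simp: disjoint_pairs_def)
    thus "copy_edges (fst x) \<union> copy_edges (snd x) \<subseteq> all_edges n \<and>
        card (copy_edges (fst x) \<union> copy_edges (snd x)) = 2 * card EG"
      using copy_edges_disjoint[OF x(4)]
      by (simp add: copy_edges_subset card_copy_edges card_Un_disjoint finite_copy_edges)
  qed (use p_pos p_less_1 in auto)
  moreover have "measure_pmf.expectation (ER n p) (\<lambda>G. real (card (labelled G)) ^ 2) =
      measure_pmf.expectation (ER n p) (\<lambda>G. real (card (overlapping G)) +
        real (card {x \<in> disjoint_pairs. copy_edges (fst x) \<union> copy_edges (snd x) \<subseteq> G}))"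
    unfolding of_nat_power[symmetric] card_labelled_sq by simp
  ultimately show ?thesis
    unfolding P0_eq_ER by simp
qed

lemma disjoint_pairs_weight_ge:
  assumes "2 * K \<le> n"
  shows "1 - 2 * real K ^ 2 / real n \<le> real (card disjoint_pairs) * p ^ (2 * card EG) / \<mu>\<^sup>2"
proof -
  have "(1 - 2 * real K ^ 2 / real n) * real (card Inj) \<le> (\<Prod>i<K. real (n - K - i))"
    using prod_lessThan_shift_ge[OF assms] by (simp add: card_injections)
  hence "(1 - 2 * real K ^ 2 / real n) * real (card Inj) * (real (card Inj) * p ^ (2 * card EG))
      \<le> (\<Prod>i<K. real (n - K - i)) * (real (card Inj) * p ^ (2 * card EG))"
    using p_pos by (intro mult_right_mono) auto
  hence "(1 - 2 * real K ^ 2 / real n) * \<mu>\<^sup>2 \<le> real (card disjoint_pairs) * p ^ (2 * card EG)"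
    unfolding \<mu>_def card_disjoint_pairs power_mult_distrib power_mult[symmetric]
    by (simp add: algebra_simps power2_eq_square)
  thus ?thesis using \<mu>_pos by (simp add: pos_le_divide_eq)
qed

lemma expectation_I_stat_le:
  assumes "2 * K \<le> n"
  shows "measure_pmf.expectation (P0 lam n) (I_stat n K EG) \<le>
     8 * (measure_pmf.expectation (P0 lam n) (\<lambda>G. (LR lam n K EG G)\<^sup>2) - 1) + 8 * real K ^ 2 / real n"
proof -
  let ?E = "measure_pmf.expectation (P0 lam n)"
  define X where "X = (\<lambda>G. real (card (labelled G)))"
  define Y where "Y = (\<lambda>G. real (card (overlapping G)))"
  define D where "D = real (card disjoint_pairs) * p ^ (2 * card EG)"
  have "I_stat n K EG G \<le> 4 * Y G / \<mu>\<^sup>2 + 4 * (X G - \<mu>)\<^sup>2 / \<mu>\<^sup>2" for G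
    using ratio_le_deviation_bound[of "Y G" "X G" \<mu>] \<mu>_pos card_overlapping_le[of G]
    unfolding I_stat_eq X_def Y_def by simp
  hence "?E (I_stat n K EG) \<le> ?E (\<lambda>G. 4 * Y G / \<mu>\<^sup>2 + 4 * (X G - \<mu>)\<^sup>2 / \<mu>\<^sup>2)"
    by (intro integral_mono) (simp_all add: P0_eq_ER)
  also have "\<dots> = 4 * ?E Y / \<mu>\<^sup>2 + 4 * ?E (\<lambda>G. (X G)\<^sup>2 - 2 * \<mu> * X G + \<mu>\<^sup>2) / \<mu>\<^sup>2"
    by (simp add: P0_eq_ER power2_diff algebra_simps)
  also have "\<dots> = 4 * (?E (\<lambda>G. (X G)\<^sup>2) - D) / \<mu>\<^sup>2 + 4 * (?E (\<lambda>G. (X G)\<^sup>2) - \<mu>\<^sup>2) / \<mu>\<^sup>2"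
    using expectation_card_labelled expectation_card_labelled_sq
    by (simp add: P0_eq_ER X_def Y_def D_def power2_eq_square)
  also have "\<dots> = 8 * (?E (\<lambda>G. (X G)\<^sup>2) / \<mu>\<^sup>2 - 1) + 4 * (1 - D / \<mu>\<^sup>2)"
    using \<mu>_pos by (simp add: field_simps)
  also have "\<dots> \<le> 8 * (?E (\<lambda>G. (X G)\<^sup>2) / \<mu>\<^sup>2 - 1) + 8 * real K ^ 2 / real n"
    using disjoint_pairs_weight_ge[OF assms] by (simp add: D_def)
  finally show ?thesis by (simp add: expectation_LR_sq X_def)
qed

end

lemma eventually_double_le_of_sqrt_ratio_tendsto_0:
  assumes "(\<lambda>n. real (k n) / sqrt (real n)) \<longlonglongrightarrow> 0"
  shows "\<forall>\<^sub>F n in sequentially. 2 * k n \<le> n"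
proof -
  have "\<forall>\<^sub>F n in sequentially. real (k n) / sqrt (real n) < 1 / 2"
    using assms by (rule order_tendstoD) simp
  with eventually_ge_at_top[of 1] show ?thesis
  proof eventually_elim
    case (elim n)
    hence "sqrt (real n) \<le> real n"
      by (intro real_le_lsqrt) (auto simp: power2_eq_square)
    moreover have "2 * real (k n) < sqrt (real n)"
      using elim by (simp add: field_simps)
    ultimately show "2 * k n \<le> n" by linarith
  qed
qed

theorem lemma10:
  fixes lam :: real and K :: "nat \<Rightarrow> nat" and EG :: "nat \<Rightarrow> nat set set"
  assumes lam_pos: "lam > 0"
    and graph: "\<And>n. EG n \<subseteq> all_edges (K n)"
    and K_small: "(\<lambda>n. real (K n) / sqrt (real n)) \<longlonglongrightarrow> 0"
    and EX_big: "filterlim (\<lambda>n. measure_pmf.expectation (P0 lam n)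
                   (\<lambda>G. real (X_count n (K n) (EG n) G))) at_top sequentially"
    and L2: "(\<lambda>n. measure_pmf.expectation (P0 lam n)
                   (\<lambda>G. (LR lam n (K n) (EG n) G)^2)) \<longlonglongrightarrow> 1"
  shows "(\<lambda>n. measure_pmf.expectation (P0 lam n) (I_stat n (K n) (EG n))) \<longlonglongrightarrow> 0"
proof -
  define bound where "bound n = 8 * (measure_pmf.expectation (P0 lam n)
    (\<lambda>G. (LR lam n (K n) (EG n) G)\<^sup>2) - 1) + 8 * (real (K n) / sqrt (real n))\<^sup>2" for n
  have "\<forall>\<^sub>F n in sequentially. lam < real n"
    using filterlim_real_sequentially by (simp add: filterlim_at_top_dense)
  with eventually_double_le_of_sqrt_ratio_tendsto_0[OF K_small]
  have bounded: "\<forall>\<^sub>F n in sequentially.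
      0 \<le> measure_pmf.expectation (P0 lam n) (I_stat n (K n) (EG n)) \<and>
      measure_pmf.expectation (P0 lam n) (I_stat n (K n) (EG n)) \<le> bound n"
  proof eventually_elim
    case (elim n)
    interpret planted n "K n" "EG n" lam
      using lam_pos elim graph by unfold_locales auto
    show ?case
      using expectation_I_stat_le[OF elim(1)]
      by (simp add: integral_nonneg I_stat_def bound_def power_divide)
  qed
  have "bound \<longlonglongrightarrow> 8 * (1 - 1) + 8 * 0\<^sup>2"
    unfolding bound_def by (intro tendsto_intros L2 K_small)
  hence "bound \<longlonglongrightarrow> 0" by simp
  with bounded[unfolded eventually_conj_iff] show ?thesis
    by (elim conjE tendsto_sandwich[OF _ _ tendsto_const])
qed

end
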